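(* For an integer $d\geq2$ and $\mu,\nu\in[0,1]$ define $$f_d(\mu,\nu)=(d-2)(\mu+\nu-\mu\nu)+\mu^2+\nu^2,\qquad g_d(\mu,\nu)=2(d-2)(\mu+\nu-\mu\nu)-d(\mu^2+\nu^2)+3.$$ Then for every $d\geq2$ and all $\mu,\nu\in[0,1]$, the inequality $f_d(\mu,\nu)>d-1$ implies both $g_d(\mu,\nu)<d-1$ and $\mu+\nu>1$. For $d=2$ the converse also holds: if $g_2(\mu,\nu)<1$ and $\mu+\nu>1$ then $f_2(\mu,\nu)>1$. For every $d\geq3$ the converse fails: there exist $\mu,\nu\in[0,1]$ with $\mu+\nu>1$ and $g_d(\mu,\nu)<d-1$ but $f_d(\mu,\nu)\leq d-1$.
   Context: Interpretation (not needed for the claim): for noisy versions $\mu|\varphi_x\rangle\langle\varphi_x|+(1-\mu)I/d$ and $\nu|\psi_y\rangle\langle\psi_y|+(1-\nu)I/d$ of two measurements in mutually unbiased bases of $\mathbb{C}^d$, $f_d>d-1$ characterizes usefulness for $(2,d)$-QRAC and, given $\mu+\nu>1$, $g_d<d-1$ characterizes incompatibility. *)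

theory Defs
  imports Complex_Main
begin

definition f_d :: "nat \<Rightarrow> real \<Rightarrow> real \<Rightarrow> real" where
  "f_d d \<mu> \<nu> = (real d - 2) * (\<mu> + \<nu> - \<mu> * \<nu>) + \<mu>^2 + \<nu>^2"

definition g_d :: "nat \<Rightarrow> real \<Rightarrow> real \<Rightarrow> real" where
  "g_d d \<mu> \<nu> = 2 * (real d - 2) * (\<mu> + \<nu> - \<mu> * \<nu>) - real d * (\<mu>^2 + \<nu>^2) + 3"

end

theory Submission
  imports Defs
begin

text \<open>Everything hinges on \<open>q = \<mu>\<^sup>2 + \<nu>\<^sup>2\<close>. Since \<open>1 - (\<mu> + \<nu> - \<mu>\<nu>) = (1 - \<mu>)(1 - \<nu>) \<ge> 0\<close>,
  replacing \<open>\<mu> + \<nu> - \<mu>\<nu>\<close> by \<open>1\<close> bounds \<open>f\<^sub>d\<close> by \<open>d - 2 + q\<close> and \<open>g\<^sub>d\<close> by \<open>2d - 1 - dq\<close>.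
  Hence \<open>f\<^sub>d > d - 1\<close> forces \<open>q > 1\<close>, which gives \<open>g\<^sub>d < d - 1\<close>, and also
  \<open>\<mu> + \<nu> \<ge> q > 1\<close> on the unit square. For \<open>d = 2\<close> the mixed term disappears:
  \<open>f\<^sub>2 = q\<close> and \<open>g\<^sub>2 = 3 - 2q\<close>, so both conditions say \<open>q > 1\<close>. For \<open>d \<ge> 3\<close> the point
  \<open>\<mu> = \<nu> = 7/10\<close>, where \<open>q = 49/50\<close> is just below \<open>1\<close>, separates the two conditions.\<close>

lemma add_diff_mult_le_one:
  fixes \<mu> \<nu> :: real
  assumes "\<mu> \<le> 1" "\<nu> \<le> 1"
  shows "\<mu> + \<nu> - \<mu> * \<nu> \<le> 1"
proof -
  have "0 \<le> (1 - \<mu>) * (1 - \<nu>)" using assms by simp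
  then show ?thesis by (simp add: algebra_simps)
qed

lemma scaled_add_diff_mult_le:
  assumes "d \<ge> 2" "\<mu> \<le> 1" "\<nu> \<le> 1"
  shows "(real d - 2) * (\<mu> + \<nu> - \<mu> * \<nu>) \<le> real d - 2"
  using assms add_diff_mult_le_one by (simp add: mult_left_le)

lemma f_d_le:
  assumes "d \<ge> 2" "\<mu> \<le> 1" "\<nu> \<le> 1"
  shows "f_d d \<mu> \<nu> \<le> real d - 2 + (\<mu>\<^sup>2 + \<nu>\<^sup>2)"
  using scaled_add_diff_mult_le[OF assms] unfolding f_d_def by simp

lemma g_d_le:
  assumes "d \<ge> 2" "\<mu> \<le> 1" "\<nu> \<le> 1"
  shows "g_d d \<mu> \<nu> \<le> 2 * real d - 1 - real d * (\<mu>\<^sup>2 + \<nu>\<^sup>2)"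
  using scaled_add_diff_mult_le[OF assms] unfolding g_d_def by (simp add: algebra_simps)

lemma add_gt_one_if_sum_squares_gt_one:
  fixes \<mu> \<nu> :: real
  assumes "\<mu> \<in> {0..1}" "\<nu> \<in> {0..1}" "\<mu>\<^sup>2 + \<nu>\<^sup>2 > 1"
  shows "\<mu> + \<nu> > 1"
proof -
  have "\<mu>\<^sup>2 \<le> \<mu>" "\<nu>\<^sup>2 \<le> \<nu>"
    using assms(1,2) by (auto simp: power2_eq_square mult_left_le_one_le)
  then show ?thesis using assms(3) by linarith
qed

lemma f_d_two: "f_d 2 \<mu> \<nu> = \<mu>\<^sup>2 + \<nu>\<^sup>2"
  unfolding f_d_def by simp

lemma g_d_two: "g_d 2 \<mu> \<nu> = 3 - 2 * (\<mu>\<^sup>2 + \<nu>\<^sup>2)"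
  unfolding g_d_def by simp

lemma f_d_seven_tenths: "f_d d (7/10) (7/10) = 91/100 * real d - 21/25"
  unfolding f_d_def by (simp add: power2_eq_square field_simps)

lemma g_d_seven_tenths: "g_d d (7/10) (7/10) = 21/25 * real d - 16/25"
  unfolding g_d_def by (simp add: power2_eq_square field_simps)

theorem proposition4:
  shows "(\<forall>d::nat. d \<ge> 2 \<longrightarrow> (\<forall>\<mu> \<in> {0..1}. \<forall>\<nu> \<in> {0..1}.
            f_d d \<mu> \<nu> > real d - 1 \<longrightarrow> g_d d \<mu> \<nu> < real d - 1 \<and> \<mu> + \<nu> > 1))
      \<and> (\<forall>\<mu> \<in> {0..1}. \<forall>\<nu> \<in> {0..1}.
            g_d 2 \<mu> \<nu> < 1 \<and> \<mu> + \<nu> > 1 \<longrightarrow> f_d 2 \<mu> \<nu> > 1)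
      \<and> (\<forall>d::nat. d \<ge> 3 \<longrightarrow> (\<exists>\<mu> \<in> {0..1}. \<exists>\<nu> \<in> {0..1}.
            \<mu> + \<nu> > 1 \<and> g_d d \<mu> \<nu> < real d - 1 \<and> f_d d \<mu> \<nu> \<le> real d - 1))"
proof (intro conjI allI impI ballI)
  fix d :: nat and \<mu> \<nu> :: real
  assume d: "d \<ge> 2" and \<mu>: "\<mu> \<in> {0..1}" and \<nu>: "\<nu> \<in> {0..1}"
    and f: "f_d d \<mu> \<nu> > real d - 1"
  have q: "\<mu>\<^sup>2 + \<nu>\<^sup>2 > 1"
    using f f_d_le[OF d] \<mu> \<nu> by force
  have "real d * 1 < real d * (\<mu>\<^sup>2 + \<nu>\<^sup>2)"
    using q d by (intro mult_strict_left_mono) auto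
  then show "g_d d \<mu> \<nu> < real d - 1"
    using g_d_le[OF d] \<mu> \<nu> by force
  show "\<mu> + \<nu> > 1"
    using add_gt_one_if_sum_squares_gt_one[OF \<mu> \<nu> q] .
next
  fix \<mu> \<nu> :: real
  assume "g_d 2 \<mu> \<nu> < 1 \<and> \<mu> + \<nu> > 1"
  then show "f_d 2 \<mu> \<nu> > 1" by (simp add: f_d_two g_d_two)
next
  fix d :: nat
  assume "d \<ge> 3"
  then have "real d \<ge> 3" by simp
  then show "\<exists>\<mu> \<in> {0..1}. \<exists>\<nu> \<in> {0..1}.
            \<mu> + \<nu> > 1 \<and> g_d d \<mu> \<nu> < real d - 1 \<and> f_d d \<mu> \<nu> \<le> real d - 1"
    by (intro bexI[of _ "7/10"]) (auto simp: f_d_seven_tenths g_d_seven_tenths)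
qed

end
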